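(* Let $G=(V,E,\mathcal{W})$ be a coherent matrix-weighted network as described in the context whose underlying undirected graph is not bipartite, and consider the random walk dynamics $\mathbf{y}_j(t+1)=\sum_i \mathbf{W}_{ij}^T\mathbf{y}_i(t)/d_i$, $j=1,\dots,n$, i.e. $\mathbf{y}(t+1)=\mathcal{P}^T\mathbf{y}(t)$ with $\mathcal{P}=\mathcal{D}^{-1}\mathcal{W}$ and $\mathbf{y}=(\mathbf{y}_1;\dots;\mathbf{y}_n)$, $\mathbf{y}_i\in\mathbb{R}^{n_d}$, with initial vectors $\mathbf{y}_i(0)$. Then for each node $v_j$, $\mathbf{y}_j(t)\to\mathbf{y}_j^*$ as $t\to\infty$, where $$\mathbf{y}_j^{*T}=\bar{\mathbf{y}}(0)^T\mathbf{S}_{1\sigma(j)}\,d_j/(2m),\qquad \bar{\mathbf{y}}(0)^T=\sum_{i=1}^n\mathbf{y}_i(0)^T\mathbf{S}_{\sigma(i)1},\qquad 2m=\sum_j d_j.$$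
   Context: A matrix-weighted network (MWN) is $G=(V,E,\mathcal{W})$ with node set $V=\{v_1,\dots,v_n\}$ and edge set $E\subset V\times V$, whose underlying graph is connected. For a fixed dimension $n_d$, each ordered pair $(i,j)$ carries $\mathbf{W}_{ij}\in\mathbb{R}^{n_d\times n_d}$, with $\mathbf{W}_{ij}=0$ iff $(v_i,v_j)\notin E$, and $\mathbf{W}_{ij}=\mathbf{W}_{ji}^T$. Write $w_{ij}=\|\mathbf{W}_{ij}\|_2$ and, for edges, $\mathbf{R}_{ij}=\mathbf{W}_{ij}/w_{ij}$ (transformation of the edge). $\mathcal{W}$ is the $nn_d\times nn_d$ block matrix with blocks $\mathbf{W}_{ij}$; $d_i=\sum_j w_{ij}$, $\mathcal{D}=\mathrm{diag}(d_i)\otimes\mathbf{I}$ ($\mathbf{I}$ the $n_d\times n_d$ identity). The transformation of a directed path or cycle with consecutive edges $e_1,\dots,e_k$ is $\mathbf{R}(e_1)\cdots\mathbf{R}(e_k)$; $G$ is coherent if every directed cycle $(v_{i_1},v_{i_2}),\dots,(v_{i_l},v_{i_1})$ ($l\ge2$, distinct nodes) has transformation $\mathbf{I}$. For coherent $G$ there is a partition $\{V_1,\dots,V_{l_p}\}$ of $V$ such that edges inside a part have transformation $\mathbf{I}$, all edges from a part $V_a$ to a part $V_b$ share the same transformation, and every directed cycle of parts (as super nodes) has transformation $\mathbf{I}$. For such a partition, $\sigma(i)$ is the index of the part containing $v_i$, and $\mathbf{S}_{hl}$ is the transformation of a directed path from a node of $V_h$ to a node of $V_l$. *)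

theory Defs
  imports "HOL-Analysis.Analysis"
begin

text \<open>A matrix-weighted network on the node type 'n (finite) with block dimension
  CARD('d).  The weight matrix of the ordered pair (i,j) is W i j; the edge set is
  {(i,j). W i j \<noteq> 0}.\<close>


definition mwn_sym :: "('n \<Rightarrow> 'n \<Rightarrow> real^'d::finite^'d) \<Rightarrow> bool" where
  "mwn_sym W \<longleftrightarrow> (\<forall>i j. W i j = transpose (W j i))"

definition wgt :: "('n \<Rightarrow> 'n \<Rightarrow> real^'d::finite^'d) \<Rightarrow> 'n \<Rightarrow> 'n \<Rightarrow> real" where
  "wgt W i j = onorm (\<lambda>x. W i j *v x)"

definition edge_trans :: "('n \<Rightarrow> 'n \<Rightarrow> real^'d::finite^'d) \<Rightarrow> 'n \<Rightarrow> 'n \<Rightarrow> real^'d::finite^'d" where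
  "edge_trans W i j = (1 / wgt W i j) *\<^sub>R W i j"

definition deg :: "('n::finite \<Rightarrow> 'n \<Rightarrow> real^'d::finite^'d) \<Rightarrow> 'n \<Rightarrow> real" where
  "deg W i = (\<Sum>j\<in>UNIV. wgt W i j)"

definition prod_trans :: "('a \<Rightarrow> 'a \<Rightarrow> real^'d^'d) \<Rightarrow> 'a list \<Rightarrow> real^'d::finite^'d" where
  "prod_trans f xs = foldr (\<lambda>p M. f (fst p) (snd p) ** M) (zip xs (tl xs)) (mat 1)"

definition is_dpath :: "('n \<Rightarrow> 'n \<Rightarrow> real^'d::finite^'d) \<Rightarrow> 'n list \<Rightarrow> bool" where
  "is_dpath W xs \<longleftrightarrow> xs \<noteq> [] \<and> distinct xs \<and>
     (\<forall>k. Suc k < length xs \<longrightarrow> W (xs ! k) (xs ! Suc k) \<noteq> 0)"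

definition mwn_connected :: "('n \<Rightarrow> 'n \<Rightarrow> real^'d::finite^'d) \<Rightarrow> bool" where
  "mwn_connected W \<longleftrightarrow> (\<forall>i j. (i, j) \<in> {(a, b). W a b \<noteq> 0}\<^sup>*)"

definition mwn_bipartite :: "('n \<Rightarrow> 'n \<Rightarrow> real^'d::finite^'d) \<Rightarrow> bool" where
  "mwn_bipartite W \<longleftrightarrow> (\<exists>c :: 'n \<Rightarrow> bool. \<forall>i j. W i j \<noteq> 0 \<longrightarrow> c i \<noteq> c j)"

definition coherent :: "('n \<Rightarrow> 'n \<Rightarrow> real^'d::finite^'d) \<Rightarrow> bool" where
  "coherent W \<longleftrightarrow> (\<forall>xs. 2 \<le> length xs \<longrightarrow> distinct xs \<longrightarrow>
      (\<forall>k < length xs. W (xs ! k) (xs ! ((k + 1) mod length xs)) \<noteq> 0) \<longrightarrow>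
      prod_trans (edge_trans W) (xs @ [hd xs]) = mat 1)"

definition part_edge :: "('n \<Rightarrow> 'n \<Rightarrow> real^'d::finite^'d) \<Rightarrow> ('n \<Rightarrow> nat) \<Rightarrow> nat \<Rightarrow> nat \<Rightarrow> bool" where
  "part_edge W \<sigma> a b \<longleftrightarrow> a \<noteq> b \<and> (\<exists>i j. \<sigma> i = a \<and> \<sigma> j = b \<and> W i j \<noteq> 0)"

definition part_trans :: "('n \<Rightarrow> 'n \<Rightarrow> real^'d::finite^'d) \<Rightarrow> ('n \<Rightarrow> nat) \<Rightarrow> nat \<Rightarrow> nat \<Rightarrow> real^'d::finite^'d" where
  "part_trans W \<sigma> a b =
     (let (i, j) = (SOME (i, j). \<sigma> i = a \<and> \<sigma> j = b \<and> W i j \<noteq> 0) in edge_trans W i j)"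

definition coherent_partition :: "('n \<Rightarrow> 'n \<Rightarrow> real^'d::finite^'d) \<Rightarrow> ('n \<Rightarrow> nat) \<Rightarrow> nat \<Rightarrow> bool" where
  "coherent_partition W \<sigma> lp \<longleftrightarrow>
     (\<forall>i. \<sigma> i \<in> {1..lp}) \<and> (\<forall>h\<in>{1..lp}. \<exists>i. \<sigma> i = h) \<and>
     (\<forall>i j. W i j \<noteq> 0 \<longrightarrow> \<sigma> i = \<sigma> j \<longrightarrow> edge_trans W i j = mat 1) \<and>
     (\<forall>i j k l. W i j \<noteq> 0 \<longrightarrow> W k l \<noteq> 0 \<longrightarrow> \<sigma> i = \<sigma> k \<longrightarrow> \<sigma> j = \<sigma> l \<longrightarrow>
        edge_trans W i j = edge_trans W k l) \<and>
     (\<forall>ps. 2 \<le> length ps \<longrightarrow> distinct ps \<longrightarrow> set ps \<subseteq> {1..lp} \<longrightarrow>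
        (\<forall>k < length ps. part_edge W \<sigma> (ps ! k) (ps ! ((k + 1) mod length ps))) \<longrightarrow>
        prod_trans (part_trans W \<sigma>) (ps @ [hd ps]) = mat 1)"

definition part_S :: "('n \<Rightarrow> 'n \<Rightarrow> real^'d::finite^'d) \<Rightarrow> ('n \<Rightarrow> nat) \<Rightarrow> nat \<Rightarrow> nat \<Rightarrow> real^'d::finite^'d" where
  "part_S W \<sigma> h l = (SOME T. \<exists>xs. is_dpath W xs \<and> \<sigma> (hd xs) = h \<and> \<sigma> (last xs) = l \<and>
                              T = prod_trans (edge_trans W) xs)"

end

theory Submission
  imports Defs "HOL-Library.Transitive_Closure_Table"
begin

(*
  Coherence of the partition makes the transformations between adjacent super nodes orthogonal
  (the two-cycle gives R_ab R_ba = I, symmetry of W gives R_ba = R_ab^T) and makes the product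
  along every closed walk of super nodes the identity.  Hence the transformation G_i of a walk
  from part 1 to the part of node i does not depend on the walk, is orthogonal, and satisfies
  G_j R_ji = G_i on every edge; moreover S_hl = G_h^T G_l.

  In the coordinates z_i = G_i y_i the dynamics is the random walk
  z_j(t+1) = sum_i (w_ji / d_i) z_i(t) with scalar weights.  It preserves sum_i z_i, and the
  energy sum_i d_i |z_i / d_i|^2 decreases by the weighted squared jumps of z / d across edges,
  so these jumps tend to 0.  On a connected graph z_j / d_j thus becomes asymptotically constant
  up to a shift of one time step per edge; an odd cycle removes the shift, so every z_j / d_j
  tends to (sum_i z_i(0)) / 2m.  Transforming back with G_j^T gives the formula.
*)

lemma sum_vector_matrix_mult: "(\<Sum>i\<in>I. v i) v* A = (\<Sum>i\<in>I. v i v* A)"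
  by (induction I rule: infinite_finite_induct) (simp_all add: vector_matrix_left_distrib)

lemma onorm_transpose_le:
  fixes A :: "real^'m::finite^'n::finite"
  shows "onorm (\<lambda>x. transpose A *v x) \<le> onorm (\<lambda>x. A *v x)"
proof (rule onorm_le)
  fix x :: "real^'n"
  let ?B = "transpose A"
  have "norm (?B *v x) ^ 2 = inner x (A *v (?B *v x))"
    by (simp add: power2_norm_eq_inner dot_lmul_matrix)
  also have "\<dots> \<le> norm x * norm (A *v (?B *v x))"
    by (rule Cauchy_Schwarz_ineq2[THEN abs_le_D1])
  also have "\<dots> \<le> norm x * (onorm (\<lambda>x. A *v x) * norm (?B *v x))"
    by (rule mult_left_mono[OF onorm[OF matrix_vector_mul_bounded_linear]]) simp
  finally have "norm (?B *v x) * norm (?B *v x) \<le> (onorm (\<lambda>x. A *v x) * norm x) * norm (?B *v x)"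
    by (simp add: power2_eq_square mult_ac)
  then show "norm (?B *v x) \<le> onorm (\<lambda>x. A *v x) * norm x"
    using onorm_pos_le[OF matrix_vector_mul_bounded_linear, of A]
    by (cases "norm (?B *v x) = 0") auto
qed

lemma onorm_transpose:
  fixes A :: "real^'m::finite^'n::finite"
  shows "onorm (\<lambda>x. transpose A *v x) = onorm (\<lambda>x. A *v x)"
  using onorm_transpose_le[of A] onorm_transpose_le[of "transpose A"] by simp

lemma wgt_sym: "mwn_sym W \<Longrightarrow> wgt W i j = wgt W j i"
  unfolding mwn_sym_def wgt_def by (metis onorm_transpose)

lemma wgt_nonneg: "0 \<le> wgt W i j"
  unfolding wgt_def by (rule onorm_pos_le[OF matrix_vector_mul_bounded_linear])

lemma wgt_eq_0_iff: "wgt W i j = 0 \<longleftrightarrow> W i j = 0"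
  unfolding wgt_def onorm_eq_0[OF matrix_vector_mul_bounded_linear]
  by (metis matrix_vector_mult_0 matrix_eq)

lemma scaleR_wgt_edge_trans: "wgt W i j *\<^sub>R edge_trans W i j = W i j"
  unfolding edge_trans_def using wgt_eq_0_iff[of W i j] by (cases "W i j = 0") auto

lemma mwn_sym_nonzero: "mwn_sym W \<Longrightarrow> W i j \<noteq> 0 \<Longrightarrow> W j i \<noteq> 0"
  unfolding mwn_sym_def transpose_def by (metis (no_types) vec_lambda_unique zero_index)

lemma deg_pos:
  assumes connected: "mwn_connected W" and nonbipartite: "\<not> mwn_bipartite W"
  shows "0 < deg W i"
proof (rule ccontr)
  assume "\<not> 0 < deg W i"
  moreover have "0 \<le> deg W i"
    unfolding deg_def by (intro sum_nonneg wgt_nonneg)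
  ultimately have "(\<Sum>j\<in>UNIV. wgt W i j) = 0"
    unfolding deg_def by simp
  then have isolated: "W i j = 0" for j
    by (subst (asm) sum_nonneg_eq_0_iff) (simp_all add: wgt_nonneg wgt_eq_0_iff)
  have single_node: "x = i" for x
    using connected[unfolded mwn_connected_def, rule_format, of i x]
    by (cases rule: converse_rtranclE) (simp_all add: isolated)
  have "W a b = 0" for a b
    using isolated[of b] single_node[of a] by simp
  then have "mwn_bipartite W"
    unfolding mwn_bipartite_def by simp
  with nonbipartite show False ..
qed

lemma successively_append_overlap:
  "successively P (xs @ y # ys) \<longleftrightarrow> successively P (xs @ [y]) \<and> successively P (y # ys)"
  by (auto simp: successively_append_iff successively_Cons)

lemma rtranclp_imp_distinct_walk:
  assumes "E\<^sup>*\<^sup>* a b"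
  obtains xs where "successively E xs" "distinct xs" "xs \<noteq> []" "hd xs = a" "last xs = b"
proof -
  have walk: "successively E (x # ys) \<and> last (x # ys) = y" if "rtrancl_path E x ys y" for x ys y
    using that by induction (auto simp: successively_Cons)
  obtain ys where "rtrancl_path E a ys b" "distinct (a # ys)"
    using assms rtranclp_eq_rtrancl_path rtrancl_path_distinct by metis
  with walk that show thesis by fastforce
qed

lemma prod_trans_Nil [simp]: "prod_trans f [] = mat 1"
  by (simp add: prod_trans_def)

lemma prod_trans_singleton [simp]: "prod_trans f [x] = mat 1"
  by (simp add: prod_trans_def)

lemma prod_trans_Cons_Cons [simp]: "prod_trans f (x # y # xs) = f x y ** prod_trans f (y # xs)"
  by (simp add: prod_trans_def)

lemma prod_trans_append:
  "prod_trans f (xs @ y # ys) = prod_trans f (xs @ [y]) ** prod_trans f (y # ys)"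
proof (induction xs)
  case (Cons x xs)
  then show ?case by (cases xs) (simp_all add: matrix_mul_assoc)
qed simp

lemma prod_trans_cong:
  assumes "\<And>a b. E a b \<Longrightarrow> f a b = g a b" and "successively E xs"
  shows "prod_trans f xs = prod_trans g xs"
  using assms(2) by (induction xs rule: induct_list012) (simp_all add: assms(1))

lemma prod_trans_rev_mult:
  assumes inverse: "\<And>a b. E a b \<Longrightarrow> f b a ** f a b = mat 1" and "successively E xs"
  shows "prod_trans f (rev xs) ** prod_trans f xs = mat 1"
  using assms(2)
proof (induction xs rule: induct_list012)
  case (3 x y xs)
  let ?P = "prod_trans f (y # xs)"
  have "prod_trans f (rev (x # y # xs)) = prod_trans f (rev (y # xs)) ** f y x"
    using prod_trans_append[of f "rev xs" y "[x]"] by simp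
  then have "prod_trans f (rev (x # y # xs)) ** prod_trans f (x # y # xs)
      = prod_trans f (rev (y # xs)) ** (f y x ** f x y) ** ?P"
    by (simp add: matrix_mul_assoc)
  with 3 show ?case by (simp add: inverse)
qed simp_all

lemma prod_trans_orthogonal:
  assumes orthogonal: "\<And>a b. E a b \<Longrightarrow> transpose (f a b) ** f a b = mat 1"
    and "successively E xs"
  shows "transpose (prod_trans f xs) ** prod_trans f xs = mat 1"
  using assms(2)
proof (induction xs rule: induct_list012)
  case (3 x y xs)
  let ?P = "prod_trans f (y # xs)"
  have "transpose (prod_trans f (x # y # xs)) ** prod_trans f (x # y # xs)
      = transpose ?P ** (transpose (f x y) ** f x y) ** ?P"
    by (simp add: matrix_transpose_mul matrix_mul_assoc)
  with 3 show ?case by (simp add: orthogonal)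
qed simp_all

lemma prod_trans_remove_closed_subwalk:
  assumes "prod_trans f (x # ys @ [x]) = mat 1"
  shows "prod_trans f (xs @ x # ys @ x # zs) = prod_trans f (xs @ x # zs)"
  using assms prod_trans_append[of f xs x "ys @ x # zs"] prod_trans_append[of f "x # ys" x zs]
    prod_trans_append[of f xs x zs]
  by simp

text \<open>A closed walk that is not a simple cycle contains a shorter closed subwalk; cutting it
  out leaves a shorter closed walk with the same product.\<close>
lemma prod_trans_closed_walk:
  assumes loop: "\<And>a. E a a \<Longrightarrow> f a a = mat 1"
    and cycle: "\<And>ps. 2 \<le> length ps \<Longrightarrow> distinct ps \<Longrightarrow> successively E (ps @ [hd ps]) \<Longrightarrow>
                  prod_trans f (ps @ [hd ps]) = mat 1"
    and "successively E xs" "xs \<noteq> []" "last xs = hd xs"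
  shows "prod_trans f xs = mat 1"
  using assms(3-5)
proof (induction xs rule: length_induct)
  case (1 xs)
  show ?case
  proof (cases "length xs = 1")
    case True
    then show ?thesis by (auto simp: length_Suc_conv)
  next
    case False
    define ys where "ys = butlast xs"
    have "ys \<noteq> []"
      using False \<open>xs \<noteq> []\<close> by (cases xs) (auto simp: ys_def)
    then have xs: "xs = ys @ [hd ys]"
      using 1(3,4) by (metis append_butlast_last_id hd_append2 ys_def)
    show ?thesis
    proof (cases "distinct ys")
      case True
      show ?thesis
      proof (cases "length ys = 1")
        case True
        then obtain a where "xs = [a, a]" using xs by (auto simp: length_Suc_conv)
        with 1(2) show ?thesis by (simp add: loop)
      next
        case False
        then have "2 \<le> length ys" using \<open>ys \<noteq> []\<close> by (cases ys) (auto simp: Suc_le_eq)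
        moreover have "successively E (ys @ [hd ys])" using 1(2) xs by simp
        ultimately show ?thesis using cycle \<open>distinct ys\<close> xs by simp
      qed
    next
      case False
      then obtain as x bs cs where ys: "ys = as @ [x] @ bs @ [x] @ cs"
        using not_distinct_decomp by blast
      define zs where "zs = cs @ [hd ys]"
      have xs': "xs = as @ x # bs @ x # zs"
        using xs ys by (simp add: zs_def)
      have "successively E (as @ x # bs @ x # zs)"
        using 1(2) xs' by simp
      then have "successively E (as @ [x])" "successively E (x # bs @ x # zs)"
        using successively_append_overlap[of E as x "bs @ x # zs"] by blast+
      moreover have "successively E (x # bs @ [x])" "successively E (x # zs)"
        using calculation(2) successively_append_overlap[of E "x # bs" x zs] by simp_all
      ultimately have walks: "successively E (x # bs @ [x])" "successively E (as @ x # zs)"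
        using successively_append_overlap[of E as x zs] by blast+
      have inner: "prod_trans f (x # bs @ [x]) = mat 1"
        by (rule 1(1)[rule_format, OF _ walks(1)]) (simp_all add: xs' zs_def)
      have "hd (as @ x # zs) = hd ys" "last (as @ x # zs) = hd ys"
        using ys by (cases as) (simp_all add: zs_def)
      then have "prod_trans f (as @ x # zs) = mat 1"
        by (intro 1(1)[rule_format, OF _ walks(2)]) (simp_all add: xs')
      then show ?thesis
        using xs' prod_trans_remove_closed_subwalk[OF inner] by simp
    qed
  qed
qed

text \<open>No inverse hypothesis is needed: f b a ** f a b is the product along the closed walk
  [b, a, b].\<close>
lemma prod_trans_path_independent:
  assumes sym: "\<And>a b. E a b \<Longrightarrow> E b a"
    and closed: "\<And>xs. successively E xs \<Longrightarrow> xs \<noteq> [] \<Longrightarrow> last xs = hd xs \<Longrightarrow> prod_trans f xs = mat 1"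
    and walk1: "successively E p" "p \<noteq> []"
    and walk2: "successively E q" "q \<noteq> []"
    and ends: "hd p = hd q" "last p = last q"
  shows "prod_trans f p = prod_trans f q"
proof -
  have inverse: "f b a ** f a b = mat 1" if "E a b" for a b
    using closed[of "[b, a, b]"] sym[OF that] that by simp
  obtain p' where p: "p = p' @ [last q]"
    using walk1(2) ends(2) by (metis append_butlast_last_id)
  obtain q' where q: "rev q = last q # q'"
    using walk2(2) by (metis hd_rev list.collapse rev_is_Nil_conv)
  have "successively E (rev q)"
    unfolding successively_rev using walk2(1) by (rule successively_mono) (rule sym)
  with walk1(1) have closed_walk: "successively E (p' @ last q # q')"
    using p q successively_append_overlap[of E p' "last q" q'] by simp
  have "last (last q # q') = hd q"
    using q by (metis last_rev)
  then have "last (p' @ last q # q') = hd (p' @ last q # q')"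
    using p ends(1) by (cases p') auto
  with closed_walk have "prod_trans f (p' @ last q # q') = mat 1"
    by (intro closed) simp_all
  then have right_inverse: "prod_trans f p ** prod_trans f (rev q) = mat 1"
    using p q prod_trans_append by metis
  have "prod_trans f p = prod_trans f p ** (prod_trans f (rev q) ** prod_trans f q)"
    using prod_trans_rev_mult[OF inverse walk2(1)] by simp
  also have "\<dots> = prod_trans f q"
    by (metis matrix_mul_assoc right_inverse matrix_mul_lid)
  finally show ?thesis .
qed

text \<open>Meaningful only if x is reachable from r; otherwise the product is taken along an
  arbitrary list.\<close>
definition potential :: "('a \<Rightarrow> 'a \<Rightarrow> bool) \<Rightarrow> ('a \<Rightarrow> 'a \<Rightarrow> real^'d^'d) \<Rightarrow> 'a \<Rightarrow> 'a \<Rightarrow> real^'d::finite^'d"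
  where "potential E f r x = prod_trans f (SOME p. successively E p \<and> p \<noteq> [] \<and> hd p = r \<and> last p = x)"

lemma potential_eq_prod_trans:
  assumes sym: "\<And>a b. E a b \<Longrightarrow> E b a"
    and closed: "\<And>xs. successively E xs \<Longrightarrow> xs \<noteq> [] \<Longrightarrow> last xs = hd xs \<Longrightarrow> prod_trans f xs = mat 1"
    and walk: "successively E p" "p \<noteq> []" "hd p = r"
  shows "potential E f r (last p) = prod_trans f p"
proof -
  let ?q = "SOME q. successively E q \<and> q \<noteq> [] \<and> hd q = r \<and> last q = last p"
  have "successively E ?q \<and> ?q \<noteq> [] \<and> hd ?q = r \<and> last ?q = last p"
    by (rule someI[of _ p]) (use walk in simp)
  with walk show ?thesis
    unfolding potential_def by (intro prod_trans_path_independent[OF sym closed]) auto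
qed

lemma potential_extend:
  assumes sym: "\<And>a b. E a b \<Longrightarrow> E b a"
    and closed: "\<And>xs. successively E xs \<Longrightarrow> xs \<noteq> [] \<Longrightarrow> last xs = hd xs \<Longrightarrow> prod_trans f xs = mat 1"
    and reach: "E\<^sup>*\<^sup>* r a"
    and walk: "successively E (a # q)"
  shows "potential E f r (last (a # q)) = potential E f r a ** prod_trans f (a # q)"
proof -
  obtain p where p: "successively E p" "p \<noteq> []" "hd p = r" "last p = a"
    using reach rtranclp_imp_distinct_walk by metis
  then obtain p' where p': "p = p' @ [a]"
    by (metis append_butlast_last_id)
  have "successively E (p' @ a # q)"
    using p(1) walk p' successively_append_overlap by metis
  moreover have "hd (p' @ a # q) = r"
    using p(3) p' by (cases p') simp_all
  ultimately have "potential E f r (last (a # q)) = prod_trans f (p' @ a # q)"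
    using potential_eq_prod_trans[OF sym closed] by fastforce
  also have "\<dots> = potential E f r a ** prod_trans f (a # q)"
    using potential_eq_prod_trans[OF sym closed p(1-3)] p(4) p' prod_trans_append by metis
  finally show ?thesis .
qed

inductive even_walk and odd_walk for E :: "'a \<Rightarrow> 'a \<Rightarrow> bool" and r :: 'a where
  even_walk_root: "even_walk E r r"
| odd_walk_step: "even_walk E r x \<Longrightarrow> E x y \<Longrightarrow> odd_walk E r y"
| even_walk_step: "odd_walk E r x \<Longrightarrow> E x y \<Longrightarrow> even_walk E r y"

lemma even_or_odd_walk:
  assumes "E\<^sup>*\<^sup>* r x"
  shows "even_walk E r x \<or> odd_walk E r x"
  using assms by induction (auto intro: even_walk_odd_walk.intros)

lemma even_and_odd_walk:
  assumes connected: "\<And>x. E\<^sup>*\<^sup>* r x"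
    and nonbipartite: "\<not> (\<exists>c :: 'a \<Rightarrow> bool. \<forall>x y. E x y \<longrightarrow> c x \<noteq> c y)"
  obtains x where "even_walk E r x" "odd_walk E r x"
proof -
  obtain x y where "E x y" "even_walk E r x = even_walk E r y"
    using nonbipartite[unfolded not_ex, rule_format, of "even_walk E r"] by blast
  with connected that show thesis
    by (metis even_or_odd_walk odd_walk_step even_walk_step)
qed

context
  fixes E :: "'a \<Rightarrow> 'a \<Rightarrow> bool" and u :: "nat \<Rightarrow> 'a \<Rightarrow> 'v::real_normed_vector"
  assumes sym: "\<And>a b. E a b \<Longrightarrow> E b a"
    and edge_tendsto: "\<And>a b. E a b \<Longrightarrow> (\<lambda>t. u t b - u (Suc t) a) \<longlonglongrightarrow> 0"
begin

lemma even_odd_walk_tendsto: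
  shows "even_walk E r x \<Longrightarrow> (\<lambda>t. u t x - u t r) \<longlonglongrightarrow> 0"
    and "odd_walk E r x \<Longrightarrow> (\<lambda>t. u t x - u (Suc t) r) \<longlonglongrightarrow> 0 \<and> (\<lambda>t. u (Suc t) x - u t r) \<longlonglongrightarrow> 0"
proof (induction rule: even_walk_odd_walk.inducts)
  case (odd_walk_step x y)
  have "(\<lambda>t. (u t y - u (Suc t) x) + (u (Suc t) x - u (Suc t) r)) \<longlonglongrightarrow> 0 + 0"
    using edge_tendsto[OF odd_walk_step(3)] LIMSEQ_Suc[OF odd_walk_step(2)] by (intro tendsto_add)
  moreover have "(\<lambda>t. (u t x - u t r) - (u t x - u (Suc t) y)) \<longlonglongrightarrow> 0 - 0"
    using odd_walk_step(2) edge_tendsto[OF sym[OF odd_walk_step(3)]] by (intro tendsto_diff)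
  ultimately show ?case by (simp add: algebra_simps)
next
  case (even_walk_step x y)
  have "(\<lambda>t. (u t y - u (Suc t) x) + (u (Suc t) x - u t r)) \<longlonglongrightarrow> 0 + 0"
    using edge_tendsto[OF even_walk_step(3)] even_walk_step(2) by (intro tendsto_add) simp_all
  then show ?case by simp
qed simp

text \<open>A node reachable from r by walks of both parities forces u (Suc t) r - u t r to vanish,
  after which the parity of a walk no longer matters.\<close>
lemma tendsto_consensus:
  assumes connected: "\<And>x. E\<^sup>*\<^sup>* r x"
    and nonbipartite: "\<not> (\<exists>c :: 'a \<Rightarrow> bool. \<forall>x y. E x y \<longrightarrow> c x \<noteq> c y)"
  shows "(\<lambda>t. u t x - u t r) \<longlonglongrightarrow> 0"
proof -
  obtain y where y: "even_walk E r y" "odd_walk E r y"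
    using connected nonbipartite by (rule even_and_odd_walk)
  have "(\<lambda>t. (u t y - u t r) - (u t y - u (Suc t) r)) \<longlonglongrightarrow> 0 - 0"
    using even_odd_walk_tendsto(1)[OF y(1)] even_odd_walk_tendsto(2)[OF y(2)]
    by (intro tendsto_diff) simp_all
  then have root_step: "(\<lambda>t. u (Suc t) r - u t r) \<longlonglongrightarrow> 0"
    by simp
  show ?thesis
    using even_or_odd_walk[OF connected]
  proof
    assume "odd_walk E r x"
    then have "(\<lambda>t. (u t x - u (Suc t) r) + (u (Suc t) r - u t r)) \<longlonglongrightarrow> 0 + 0"
      using even_odd_walk_tendsto(2) root_step by (intro tendsto_add) simp_all
    then show ?thesis by simp
  qed (rule even_odd_walk_tendsto(1))
qed

end

locale random_walk =
  fixes w :: "'n::finite \<Rightarrow> 'n \<Rightarrow> real" and z :: "nat \<Rightarrow> 'n \<Rightarrow> 'v::real_inner"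
  assumes w_sym: "w a b = w b a"
    and w_nonneg: "0 \<le> w a b"
    and degree_pos: "0 < sum (w a) UNIV"
    and step: "z (Suc t) j = (\<Sum>i\<in>UNIV. (w j i / sum (w i) UNIV) *\<^sub>R z t i)"
begin

abbreviation degree :: "'n \<Rightarrow> real" where
  "degree i \<equiv> sum (w i) UNIV"

definition normalized :: "nat \<Rightarrow> 'n \<Rightarrow> 'v" where
  "normalized t i = (1 / degree i) *\<^sub>R z t i"

definition energy :: "nat \<Rightarrow> real" where
  "energy t = (\<Sum>i\<in>UNIV. degree i * (norm (normalized t i))\<^sup>2)"

lemma degree_nonzero [simp]: "degree i \<noteq> 0"
  using degree_pos[of i] by simp

lemma scaleR_degree_normalized: "degree i *\<^sub>R normalized t i = z t i"
  by (simp add: normalized_def)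

lemma sum_column: "(\<Sum>j\<in>UNIV. w j i) = degree i"
  by (simp add: w_sym)

lemma step_normalized: "degree j *\<^sub>R normalized (Suc t) j = (\<Sum>i\<in>UNIV. w j i *\<^sub>R normalized t i)"
  unfolding scaleR_degree_normalized step normalized_def by (simp add: divide_inverse)

lemma sum_invariant: "(\<Sum>j\<in>UNIV. z t j) = (\<Sum>j\<in>UNIV. z 0 j)"
proof (induction t)
  case (Suc t)
  have "(\<Sum>j\<in>UNIV. z (Suc t) j) = (\<Sum>i\<in>UNIV. \<Sum>j\<in>UNIV. (w j i / degree i) *\<^sub>R z t i)"
    unfolding step by (rule sum.swap)
  also have "\<dots> = (\<Sum>i\<in>UNIV. z t i)"
    by (simp add: scaleR_sum_left[symmetric] sum_divide_distrib[symmetric] sum_column)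
  finally show ?case using Suc by simp
qed simp

lemma energy_decrement:
  "energy t - energy (Suc t)
     = (\<Sum>j\<in>UNIV. \<Sum>i\<in>UNIV. w j i * (norm (normalized t i - normalized (Suc t) j))\<^sup>2)"
proof -
  let ?u = "normalized t" and ?v = "normalized (Suc t)"
  have row: "(\<Sum>i\<in>UNIV. w j i * (norm (?u i - ?v j))\<^sup>2)
      = (\<Sum>i\<in>UNIV. w j i * (norm (?u i))\<^sup>2) - degree j * (norm (?v j))\<^sup>2" for j
  proof -
    have "(\<Sum>i\<in>UNIV. w j i * inner (?u i) (?v j)) = inner (degree j *\<^sub>R ?v j) (?v j)"
      unfolding step_normalized by (simp add: inner_sum_left)
    then have cross: "(\<Sum>i\<in>UNIV. w j i * inner (?u i) (?v j)) = degree j * (norm (?v j))\<^sup>2"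
      by (simp add: power2_norm_eq_inner)
    have "(\<Sum>i\<in>UNIV. w j i * (norm (?u i - ?v j))\<^sup>2)
        = (\<Sum>i\<in>UNIV. w j i * (norm (?u i))\<^sup>2) - 2 * (\<Sum>i\<in>UNIV. w j i * inner (?u i) (?v j))
          + degree j * (norm (?v j))\<^sup>2"
      by (simp add: power2_norm_eq_inner inner_commute algebra_simps
          sum.distrib sum_subtractf sum_distrib_left sum_distrib_right)
    with cross show ?thesis by simp
  qed
  have "(\<Sum>j\<in>UNIV. \<Sum>i\<in>UNIV. w j i * (norm (?u i))\<^sup>2) = energy t"
    unfolding energy_def by (subst sum.swap) (simp add: sum_distrib_right[symmetric] sum_column)
  then show ?thesis
    unfolding row by (simp add: sum_subtractf energy_def)
qed

lemma edge_increment_tendsto_zero: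
  assumes "w a b \<noteq> 0"
  shows "(\<lambda>t. normalized t b - normalized (Suc t) a) \<longlonglongrightarrow> 0"
proof -
  let ?term = "\<lambda>t j i. w j i * (norm (normalized t i - normalized (Suc t) j))\<^sup>2"
  have term_nonneg: "0 \<le> ?term t j i" for t j i
    using w_nonneg by simp
  have "0 \<le> energy t - energy (Suc t)" for t
    unfolding energy_decrement by (intro sum_nonneg term_nonneg)
  then have "decseq energy"
    by (simp add: decseq_Suc_iff)
  moreover have "0 \<le> energy t" for t
    unfolding energy_def using degree_pos by (intro sum_nonneg) (simp add: less_imp_le)
  ultimately obtain L where L: "energy \<longlonglongrightarrow> L"
    using decseq_convergent by blast
  then have decrement: "(\<lambda>t. energy t - energy (Suc t)) \<longlonglongrightarrow> 0"
    using tendsto_diff[OF L LIMSEQ_Suc[OF L]] by simp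
  have "?term t a b \<le> energy t - energy (Suc t)" for t
  proof -
    have "?term t a b \<le> (\<Sum>i\<in>UNIV. ?term t a i)"
      by (rule member_le_sum) (simp_all add: term_nonneg)
    also have "\<dots> \<le> (\<Sum>j\<in>UNIV. \<Sum>i\<in>UNIV. ?term t j i)"
      by (rule member_le_sum[where f = "\<lambda>j. \<Sum>i\<in>UNIV. ?term t j i"])
        (simp_all add: term_nonneg sum_nonneg)
    finally show ?thesis by (simp add: energy_decrement)
  qed
  then have "(\<lambda>t. ?term t a b) \<longlonglongrightarrow> 0"
    by (intro tendsto_sandwich[OF _ _ tendsto_const decrement]) (simp_all add: term_nonneg)
  then have "(\<lambda>t. (1 / w a b) * ?term t a b) \<longlonglongrightarrow> 0"
    by (rule tendsto_mult_right_zero)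
  then have "(\<lambda>t. (norm (normalized t b - normalized (Suc t) a))\<^sup>2) \<longlonglongrightarrow> 0"
    using assms by simp
  from tendsto_real_sqrt[OF this] show ?thesis
    by (simp add: tendsto_norm_zero_iff)
qed

theorem tendsto_stationary:
  assumes connected: "\<And>i j. (\<lambda>a b. w a b \<noteq> 0)\<^sup>*\<^sup>* i j"
    and nonbipartite: "\<not> (\<exists>c :: 'n \<Rightarrow> bool. \<forall>i j. w i j \<noteq> 0 \<longrightarrow> c i \<noteq> c j)"
  shows "(\<lambda>t. z t j) \<longlonglongrightarrow> (degree j / (\<Sum>k\<in>UNIV. degree k)) *\<^sub>R (\<Sum>i\<in>UNIV. z 0 i)"
proof -
  let ?u = normalized and ?D = "\<Sum>k\<in>UNIV. degree k" and ?M = "\<Sum>i\<in>UNIV. z 0 i"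
  have "?D > 0"
    using degree_pos by (simp add: sum_pos)
  have "(\<lambda>t. ?u t x - ?u t j) \<longlonglongrightarrow> 0" for x
    by (rule tendsto_consensus[where E = "\<lambda>a b. w a b \<noteq> 0"])
      (use w_sym edge_increment_tendsto_zero connected nonbipartite in auto)
  then have "(\<lambda>t. \<Sum>x\<in>UNIV. degree x *\<^sub>R (?u t x - ?u t j)) \<longlonglongrightarrow> (\<Sum>x\<in>UNIV. degree x *\<^sub>R 0)"
    by (intro tendsto_intros)
  moreover have "(\<Sum>x\<in>UNIV. degree x *\<^sub>R (?u t x - ?u t j)) = ?M - ?D *\<^sub>R ?u t j" for t
    using sum_invariant[of t] scaleR_sum_left[of degree UNIV "?u t j"]
    by (simp add: scaleR_diff_right sum_subtractf scaleR_degree_normalized)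
  ultimately have "(\<lambda>t. ?M - ?D *\<^sub>R ?u t j) \<longlonglongrightarrow> 0"
    by simp
  then have "(\<lambda>t. (degree j / ?D) *\<^sub>R (?M - (?M - ?D *\<^sub>R ?u t j))) \<longlonglongrightarrow> (degree j / ?D) *\<^sub>R (?M - 0)"
    by (intro tendsto_intros)
  then show ?thesis
    using \<open>?D > 0\<close> by (simp add: scaleR_degree_normalized)
qed

end

lemma successively_cycle_iff_nth:
  assumes "ps \<noteq> []"
  shows "successively E (ps @ [hd ps]) \<longleftrightarrow> (\<forall>k < length ps. E (ps ! k) (ps ! ((k + 1) mod length ps)))"
proof -
  have "(ps @ [hd ps]) ! Suc k = ps ! ((k + 1) mod length ps)" if "k < length ps" for k
  proof (cases "Suc k = length ps")
    case True
    with assms show ?thesis by (simp add: nth_append hd_conv_nth)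
  qed (use that in \<open>simp add: nth_append\<close>)
  then show ?thesis
    unfolding successively_conv_nth by (auto simp: nth_append)
qed

lemma is_dpath_iff: "is_dpath W xs \<longleftrightarrow> xs \<noteq> [] \<and> distinct xs \<and> successively (\<lambda>a b. W a b \<noteq> 0) xs"
  unfolding is_dpath_def successively_conv_nth by blast

text \<open>The graph of super nodes gets a loop with identity transformation at every node, so that
  every walk in G projects under \<sigma> to a walk of super nodes.\<close>
definition super_adj :: "('n \<Rightarrow> 'n \<Rightarrow> real^'d::finite^'d) \<Rightarrow> ('n \<Rightarrow> nat) \<Rightarrow> nat \<Rightarrow> nat \<Rightarrow> bool" where
  "super_adj W \<sigma> a b \<longleftrightarrow> a = b \<or> part_edge W \<sigma> a b"

definition super_trans :: "('n \<Rightarrow> 'n \<Rightarrow> real^'d::finite^'d) \<Rightarrow> ('n \<Rightarrow> nat) \<Rightarrow> nat \<Rightarrow> nat \<Rightarrow> real^'d^'d" where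
  "super_trans W \<sigma> a b = (if a = b then mat 1 else part_trans W \<sigma> a b)"

text \<open>The change of frame at node i that turns every edge transformation into the identity
  (lemma gauge_edge).\<close>
definition gauge :: "('n \<Rightarrow> 'n \<Rightarrow> real^'d::finite^'d) \<Rightarrow> ('n \<Rightarrow> nat) \<Rightarrow> 'n \<Rightarrow> real^'d^'d" where
  "gauge W \<sigma> i = potential (super_adj W \<sigma>) (super_trans W \<sigma>) 1 (\<sigma> i)"

lemma super_adj_if_edge: "W i j \<noteq> 0 \<Longrightarrow> super_adj W \<sigma> (\<sigma> i) (\<sigma> j)"
  unfolding super_adj_def part_edge_def by blast

lemma successively_super_adj_map:
  "successively (\<lambda>a b. W a b \<noteq> 0) xs \<Longrightarrow> successively (super_adj W \<sigma>) (map \<sigma> xs)"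
  unfolding successively_map by (erule successively_mono) (rule super_adj_if_edge)

context
  fixes W :: "'n::finite \<Rightarrow> 'n \<Rightarrow> real^'d::finite^'d" and \<sigma> :: "'n \<Rightarrow> nat" and lp :: nat
  assumes partition: "coherent_partition W \<sigma> lp"
begin

lemma part_range: "\<sigma> i \<in> {1..lp}"
  by (rule partition[unfolded coherent_partition_def,
      THEN conjunct1, rule_format])

lemma part_nonempty: "h \<in> {1..lp} \<Longrightarrow> \<exists>i. \<sigma> i = h"
  by (rule partition[unfolded coherent_partition_def,
      THEN conjunct2, THEN conjunct1, rule_format])

lemma edge_trans_inside_part: "W i j \<noteq> 0 \<Longrightarrow> \<sigma> i = \<sigma> j \<Longrightarrow> edge_trans W i j = mat 1"
  by (rule partition[unfolded coherent_partition_def,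
      THEN conjunct2, THEN conjunct2, THEN conjunct1, rule_format])

lemma edge_trans_between_parts:
  "W i j \<noteq> 0 \<Longrightarrow> W k l \<noteq> 0 \<Longrightarrow> \<sigma> i = \<sigma> k \<Longrightarrow> \<sigma> j = \<sigma> l \<Longrightarrow> edge_trans W i j = edge_trans W k l"
  by (rule partition[unfolded coherent_partition_def,
      THEN conjunct2, THEN conjunct2, THEN conjunct2, THEN conjunct1, rule_format])

lemma part_cycle_trans:
  "2 \<le> length ps \<Longrightarrow> distinct ps \<Longrightarrow> set ps \<subseteq> {1..lp} \<Longrightarrow>
   (\<And>k. k < length ps \<Longrightarrow> part_edge W \<sigma> (ps ! k) (ps ! ((k + 1) mod length ps))) \<Longrightarrow>
   prod_trans (part_trans W \<sigma>) (ps @ [hd ps]) = mat 1"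
  by (rule partition[unfolded coherent_partition_def,
      THEN conjunct2, THEN conjunct2, THEN conjunct2, THEN conjunct2, rule_format])

lemma edge_trans_eq_super_trans:
  assumes "W i j \<noteq> 0"
  shows "edge_trans W i j = super_trans W \<sigma> (\<sigma> i) (\<sigma> j)"
proof (cases "\<sigma> i = \<sigma> j")
  case True
  then show ?thesis using edge_trans_inside_part[OF assms] by (simp add: super_trans_def)
next
  case False
  define P where "P = (\<lambda>(k, l). \<sigma> k = \<sigma> i \<and> \<sigma> l = \<sigma> j \<and> W k l \<noteq> 0)"
  obtain k l where kl: "(SOME p. P p) = (k, l)"
    by (metis surj_pair)
  have "P (i, j)"
    using assms by (simp add: P_def)
  then have "P (k, l)"
    unfolding kl[symmetric] by (rule someI)
  then have k: "\<sigma> k = \<sigma> i" "\<sigma> l = \<sigma> j" "W k l \<noteq> 0"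
    by (simp_all add: P_def)
  have "part_trans W \<sigma> (\<sigma> i) (\<sigma> j) = edge_trans W k l"
    unfolding part_trans_def P_def[symmetric] kl by simp
  also have "\<dots> = edge_trans W i j"
    by (rule edge_trans_between_parts[OF k(3) assms k(1,2)])
  finally show ?thesis
    using False by (simp add: super_trans_def)
qed

lemma prod_trans_edge_trans_eq_super_trans:
  "successively (\<lambda>a b. W a b \<noteq> 0) xs \<Longrightarrow>
     prod_trans (edge_trans W) xs = prod_trans (super_trans W \<sigma>) (map \<sigma> xs)"
  by (induction xs rule: induct_list012) (simp_all add: edge_trans_eq_super_trans)

lemma super_trans_closed_walk:
  assumes "successively (super_adj W \<sigma>) xs" "xs \<noteq> []" "last xs = hd xs"
  shows "prod_trans (super_trans W \<sigma>) xs = mat 1"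
  using _ _ assms
proof (rule prod_trans_closed_walk)
  fix ps :: "nat list"
  assume len: "2 \<le> length ps" and "distinct ps" and walk: "successively (super_adj W \<sigma>) (ps @ [hd ps])"
  have "ps ! k \<noteq> ps ! ((k + 1) mod length ps)" if "k < length ps" for k
  proof -
    have "k \<noteq> (k + 1) mod length ps"
      using that len by (cases "Suc k = length ps") auto
    moreover have "(k + 1) mod length ps < length ps"
      using len by (intro mod_less_divisor) linarith
    ultimately show ?thesis
      using that \<open>distinct ps\<close> by (simp add: nth_eq_iff_index_eq)
  qed
  moreover have ne: "ps \<noteq> []"
    using len by auto
  then have "\<forall>k < length ps. super_adj W \<sigma> (ps ! k) (ps ! ((k + 1) mod length ps))"
    using walk successively_cycle_iff_nth by blast
  ultimately have edges: "\<forall>k < length ps. part_edge W \<sigma> (ps ! k) (ps ! ((k + 1) mod length ps))"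
    unfolding super_adj_def by blast
  have "set ps \<subseteq> {1..lp}"
  proof
    fix x assume "x \<in> set ps"
    then obtain k where "k < length ps" "x = ps ! k"
      by (metis in_set_conv_nth)
    with edges part_range show "x \<in> {1..lp}"
      unfolding part_edge_def by metis
  qed
  moreover have "successively (part_edge W \<sigma>) (ps @ [hd ps])"
    using edges successively_cycle_iff_nth[OF ne] by blast
  then have "prod_trans (super_trans W \<sigma>) (ps @ [hd ps]) = prod_trans (part_trans W \<sigma>) (ps @ [hd ps])"
    by (rule prod_trans_cong[rotated]) (simp add: super_trans_def part_edge_def)
  ultimately show "prod_trans (super_trans W \<sigma>) (ps @ [hd ps]) = mat 1"
    using part_cycle_trans[OF len \<open>distinct ps\<close>] edges by simp
qed (simp add: super_trans_def)

context
  assumes sym: "mwn_sym W" and connected: "mwn_connected W"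
begin

lemma super_adj_sym: "super_adj W \<sigma> a b \<Longrightarrow> super_adj W \<sigma> b a"
  unfolding super_adj_def part_edge_def using mwn_sym_nonzero[OF sym] by blast

lemma transpose_super_trans:
  assumes "super_adj W \<sigma> a b"
  shows "transpose (super_trans W \<sigma> a b) = super_trans W \<sigma> b a"
proof (cases "a = b")
  case False
  then obtain i j where ij: "\<sigma> i = a" "\<sigma> j = b" "W i j \<noteq> 0"
    using assms unfolding super_adj_def part_edge_def by blast
  have "W j i = transpose (W i j)"
    using sym unfolding mwn_sym_def by blast
  then have "transpose (edge_trans W i j) = edge_trans W j i"
    unfolding edge_trans_def by (simp add: transpose_scalar wgt_sym[OF sym, of i j])
  then show ?thesis
    using edge_trans_eq_super_trans[OF ij(3)] edge_trans_eq_super_trans[OF mwn_sym_nonzero[OF sym ij(3)]]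
    by (simp add: ij(1,2))
qed (simp add: super_trans_def)

lemma super_trans_orthogonal:
  assumes "super_adj W \<sigma> a b"
  shows "transpose (super_trans W \<sigma> a b) ** super_trans W \<sigma> a b = mat 1"
proof (cases "a = b")
  case False
  then have edges: "part_edge W \<sigma> a b" "part_edge W \<sigma> b a"
    using assms super_adj_sym[OF assms] by (simp_all add: super_adj_def)
  moreover have "{a, b} \<subseteq> {1..lp}"
    using edges part_range unfolding part_edge_def by blast
  ultimately have "prod_trans (part_trans W \<sigma>) ([b, a] @ [hd [b, a]]) = mat 1"
    using False by (intro part_cycle_trans) (auto simp: less_Suc_eq)
  with False transpose_super_trans[OF assms] show ?thesis
    by (simp add: super_trans_def)
qed (simp add: super_trans_def)

lemma super_reachable: "(super_adj W \<sigma>)\<^sup>*\<^sup>* 1 (\<sigma> i)"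
proof -
  obtain a where "\<sigma> a = 1"
    using part_nonempty part_range[of i] by fastforce
  moreover have "(\<lambda>a b. W a b \<noteq> 0)\<^sup>*\<^sup>* a i"
    using connected unfolding mwn_connected_def by (simp add: Enum.rtranclp_rtrancl_eq)
  then have "(super_adj W \<sigma>)\<^sup>*\<^sup>* (\<sigma> a) (\<sigma> i)"
    by induction (auto intro: rtranclp.rtrancl_into_rtrancl super_adj_if_edge)
  ultimately show ?thesis by simp
qed

lemma gauge_extend:
  assumes "successively (super_adj W \<sigma>) (\<sigma> i # q)"
  shows "potential (super_adj W \<sigma>) (super_trans W \<sigma>) 1 (last (\<sigma> i # q))
           = gauge W \<sigma> i ** prod_trans (super_trans W \<sigma>) (\<sigma> i # q)"
  unfolding gauge_def using super_adj_sym super_trans_closed_walk super_reachable assms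
  by (rule potential_extend)

lemma gauge_edge:
  assumes "W j i \<noteq> 0"
  shows "gauge W \<sigma> j ** edge_trans W j i = gauge W \<sigma> i"
  using gauge_extend[of j "[\<sigma> i]"] super_adj_if_edge[where W = W, OF assms]
  by (simp add: gauge_def edge_trans_eq_super_trans[OF assms])

lemma gauge_orthogonal: "transpose (gauge W \<sigma> i) ** gauge W \<sigma> i = mat 1"
proof -
  obtain p where p: "successively (super_adj W \<sigma>) p" "p \<noteq> []" "hd p = 1" "last p = \<sigma> i"
    using super_reachable rtranclp_imp_distinct_walk by metis
  have "potential (super_adj W \<sigma>) (super_trans W \<sigma>) 1 (last p) = prod_trans (super_trans W \<sigma>) p"
    using super_adj_sym super_trans_closed_walk p(1-3) by (rule potential_eq_prod_trans)
  moreover have "transpose (prod_trans (super_trans W \<sigma>) p) ** prod_trans (super_trans W \<sigma>) p = mat 1"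
    using super_trans_orthogonal p(1) by (rule prod_trans_orthogonal)
  ultimately show ?thesis
    unfolding gauge_def p(4) by simp
qed

lemma gauge_orthogonal': "gauge W \<sigma> i ** transpose (gauge W \<sigma> i) = mat 1"
  using gauge_orthogonal matrix_left_right_inverse by blast

lemma part_S_eq_gauge: "part_S W \<sigma> (\<sigma> a) (\<sigma> b) = transpose (gauge W \<sigma> a) ** gauge W \<sigma> b"
proof -
  let ?Q = "\<lambda>T. \<exists>xs. is_dpath W xs \<and> \<sigma> (hd xs) = \<sigma> a \<and> \<sigma> (last xs) = \<sigma> b \<and>
                          T = prod_trans (edge_trans W) xs"
  have "(\<lambda>a b. W a b \<noteq> 0)\<^sup>*\<^sup>* a b"
    using connected unfolding mwn_connected_def by (simp add: Enum.rtranclp_rtrancl_eq)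
  then obtain xs where "is_dpath W xs" "hd xs = a" "last xs = b"
    unfolding is_dpath_iff by (rule rtranclp_imp_distinct_walk) auto
  then have "?Q (prod_trans (edge_trans W) xs)"
    by blast
  then have "?Q (part_S W \<sigma> (\<sigma> a) (\<sigma> b))"
    unfolding part_S_def by (rule someI)
  then obtain ys where ys: "is_dpath W ys" "\<sigma> (hd ys) = \<sigma> a" "\<sigma> (last ys) = \<sigma> b"
    and S: "part_S W \<sigma> (\<sigma> a) (\<sigma> b) = prod_trans (edge_trans W) ys"
    by blast
  obtain y ys' where ys': "ys = y # ys'"
    using ys unfolding is_dpath_iff by (metis list.exhaust)
  have walk: "successively (super_adj W \<sigma>) (\<sigma> a # map \<sigma> ys')"
    using ys ys' successively_super_adj_map[of W ys \<sigma>] unfolding is_dpath_iff by simp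
  have "last (\<sigma> a # map \<sigma> ys') = \<sigma> b"
    using ys ys' by (cases ys') (auto simp: last_map split: if_splits)
  moreover have "prod_trans (super_trans W \<sigma>) (\<sigma> a # map \<sigma> ys') = part_S W \<sigma> (\<sigma> a) (\<sigma> b)"
    using ys ys' prod_trans_edge_trans_eq_super_trans[of ys] unfolding S is_dpath_iff by simp
  ultimately have "gauge W \<sigma> b = gauge W \<sigma> a ** part_S W \<sigma> (\<sigma> a) (\<sigma> b)"
    using gauge_extend[OF walk] by (simp add: gauge_def)
  then have "transpose (gauge W \<sigma> a) ** gauge W \<sigma> b
      = (transpose (gauge W \<sigma> a) ** gauge W \<sigma> a) ** part_S W \<sigma> (\<sigma> a) (\<sigma> b)"
    by (simp add: matrix_mul_assoc)
  then show ?thesis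
    by (simp add: gauge_orthogonal)
qed

lemma gauge_mult_weight: "gauge W \<sigma> j ** W j i = wgt W j i *\<^sub>R gauge W \<sigma> i"
proof (cases "W j i = 0")
  case False
  have "gauge W \<sigma> j ** W j i = gauge W \<sigma> j ** (wgt W j i *\<^sub>R edge_trans W j i)"
    by (simp only: scaleR_wgt_edge_trans)
  also have "\<dots> = wgt W j i *\<^sub>R (gauge W \<sigma> j ** edge_trans W j i)"
    by (simp only: matrix_scalar_ac scalar_matrix_assoc)
  finally show ?thesis
    using gauge_edge[OF False] by simp
qed (simp add: wgt_eq_0_iff)

lemma gauge_step:
  assumes step: "\<forall>t j. y (Suc t) j = (\<Sum>i\<in>UNIV. (1 / deg W i) *\<^sub>R (transpose (W i j) *v y t i))"
  shows "gauge W \<sigma> j *v y (Suc t) j = (\<Sum>i\<in>UNIV. (wgt W j i / deg W i) *\<^sub>R (gauge W \<sigma> i *v y t i))"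
proof -
  have "transpose (W i j) = W j i" for i
    using sym[unfolded mwn_sym_def, rule_format, of j i] by simp
  then have "gauge W \<sigma> j *v y (Suc t) j
      = (\<Sum>i\<in>UNIV. (1 / deg W i) *\<^sub>R ((gauge W \<sigma> j ** W j i) *v y t i))"
    by (simp add: step linear_sum[OF matrix_vector_mul_linear] matrix_vector_mult_scaleR
        matrix_vector_mul_assoc)
  then show ?thesis
    by (simp add: gauge_mult_weight scaleR_matrix_vector_assoc[symmetric])
qed

lemma vector_matrix_mult_gauge_cancel: "(gauge W \<sigma> i *v v) v* gauge W \<sigma> i = v"
  by (metis vector_transpose_matrix vector_matrix_mul_assoc vector_matrix_mul_rid
      gauge_orthogonal)

lemma matrix_vector_mult_gauge_cancel: "gauge W \<sigma> i *v (v v* gauge W \<sigma> i) = v"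
  by (metis transpose_matrix_vector matrix_vector_mul_assoc matrix_vector_mul_lid
      gauge_orthogonal')

lemma sum_part_S_eq_gauge:
  "(\<Sum>i\<in>UNIV. x i v* part_S W \<sigma> (\<sigma> i) 1) v* part_S W \<sigma> 1 (\<sigma> j)
     = (\<Sum>i\<in>UNIV. gauge W \<sigma> i *v x i) v* gauge W \<sigma> j"
proof -
  obtain a where a: "\<sigma> a = 1"
    using part_nonempty part_range[of j] by fastforce
  let ?G = "gauge W \<sigma>"
  have "(\<Sum>i\<in>UNIV. x i v* part_S W \<sigma> (\<sigma> i) 1) = (\<Sum>i\<in>UNIV. (?G i *v x i) v* ?G a)"
    using part_S_eq_gauge[of _ a] a
    by (simp add: vector_matrix_mul_assoc[symmetric])
  also have "\<dots> = (\<Sum>i\<in>UNIV. ?G i *v x i) v* ?G a"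
    by (rule sum_vector_matrix_mult[symmetric])
  finally have "(\<Sum>i\<in>UNIV. x i v* part_S W \<sigma> (\<sigma> i) 1) v* part_S W \<sigma> 1 (\<sigma> j)
      = ((\<Sum>i\<in>UNIV. ?G i *v x i) v* ?G a) v* (transpose (?G a) ** ?G j)"
    using part_S_eq_gauge[of a j] a by simp
  also have "\<dots> = (?G a *v ((\<Sum>i\<in>UNIV. ?G i *v x i) v* ?G a)) v* ?G j"
    by (simp only: vector_matrix_mul_assoc[symmetric] vector_transpose_matrix)
  finally show ?thesis
    by (simp only: matrix_vector_mult_gauge_cancel)
qed

end

end

theorem proposition4:
  fixes W :: "'n::finite \<Rightarrow> 'n \<Rightarrow> real^'d::finite^'d"
    and \<sigma> :: "'n \<Rightarrow> nat" and lp :: nat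
    and y :: "nat \<Rightarrow> 'n \<Rightarrow> real^'d"
  assumes "mwn_sym W"
    and "mwn_connected W"
    and "coherent W"
    and "\<not> mwn_bipartite W"
    and "coherent_partition W \<sigma> lp"
    and "\<forall>t j. y (Suc t) j = (\<Sum>i\<in>UNIV. (1 / deg W i) *\<^sub>R (transpose (W i j) *v y t i))"
  shows "\<forall>j. (\<lambda>t. y t j) \<longlonglongrightarrow>
           (deg W j / (\<Sum>k\<in>UNIV. deg W k)) *\<^sub>R
             ((\<Sum>i\<in>UNIV. y 0 i v* part_S W \<sigma> (\<sigma> i) 1) v* part_S W \<sigma> 1 (\<sigma> j))"
proof
  fix j
  let ?z = "\<lambda>t i. gauge W \<sigma> i *v y t i" and ?c = "deg W j / (\<Sum>k\<in>UNIV. deg W k)"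
  interpret gauged: random_walk "wgt W" ?z
    using wgt_sym[OF assms(1)] wgt_nonneg deg_pos[OF assms(2,4)] gauge_step[OF assms(5,1,2,6)]
    by unfold_locales (simp_all add: deg_def)
  have "(\<lambda>t. ?z t j) \<longlonglongrightarrow> ?c *\<^sub>R (\<Sum>i\<in>UNIV. ?z 0 i)"
    using gauged.tendsto_stationary assms(2,4)
    unfolding mwn_connected_def mwn_bipartite_def wgt_eq_0_iff deg_def
    by (simp add: Enum.rtranclp_rtrancl_eq)
  then have "(\<lambda>t. ?z t j v* gauge W \<sigma> j) \<longlonglongrightarrow> (?c *\<^sub>R (\<Sum>i\<in>UNIV. ?z 0 i)) v* gauge W \<sigma> j"
    using bounded_linear.tendsto[OF matrix_vector_mul_bounded_linear[of "transpose (gauge W \<sigma> j)"]]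
    by simp
  then show "(\<lambda>t. y t j) \<longlonglongrightarrow> ?c *\<^sub>R
      ((\<Sum>i\<in>UNIV. y 0 i v* part_S W \<sigma> (\<sigma> i) 1) v* part_S W \<sigma> 1 (\<sigma> j))"
    unfolding sum_part_S_eq_gauge[OF assms(5,1,2)]
    by (simp add: vector_matrix_mult_gauge_cancel[OF assms(5,1,2)] scaleR_vector_matrix_assoc)
qed

end
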